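(* Consider the P-SSD algorithm described in the context, executed over a constant (time-invariant) digraph $G$, and let $C_{\mathrm{SSD}}=\mathrm{SSD}(D(X),D(Y))$. Let $i$ be a globally reachable node of $G$ and define $l=\max_{j\in\{1,\dots,M\}}\mathrm{dist}(j,i)$. Then $\mathcal{R}(C_k^i)=\mathcal{R}(C_{\mathrm{SSD}})$ for all $k\ge l+1$.
   Context: Data setting: a map $T:\mathcal{M}\to\mathcal{M}$, $\mathcal{M}\subseteq\mathbb{R}^n$; a dictionary $D(x)=[d_1(x),\dots,d_{N_d}(x)]$ of real-valued functions on $\mathcal{M}$; data matrices $X,Y\in\mathbb{R}^{N\times n}$ whose $i$-th rows $x_i^T,y_i^T$ satisfy $y_i=T(x_i)$; $D(X)\in\mathbb{R}^{N\times N_d}$ is the matrix with rows $D(x_1),\dots,D(x_N)$ (similarly $D(Y)$). Assumption: $D(X)$ and $D(Y)$ have full column rank. There are $M$ agents; agent $i$ holds local dictionary snapshots $D(X_i),D(Y_i)$ (obtained from a subset of the snapshot pairs) such that the union over $i$ of the rows of $[D(X_i),D(Y_i)]$ equals the set of rows of $[D(X),D(Y)]$. There are signature matrices $D(X_s),D(Y_s)$ with full column rank such that the rows of $[D(X_s),D(Y_s)]$ are contained in the rows of $[D(X_i),D(Y_i)]$ for every $i$. SSD algorithm: given $A,B\in\mathbb{R}^{m\times q}$, set $A_1=A$, $B_1=B$, $C=I_q$, and iterate: let $[Z^A_j;Z^B_j]$ be a matrix whose columns form a basis of the null space of $[A_j,B_j]$ (with $Z^A_j$ having as many rows as $A_j$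 has columns); if the null space is trivial return $0$; if the number of rows of $Z^A_j$ is at most its number of columns, return $C$; otherwise set $C\leftarrow CZ^A_j$, $A_{j+1}=A_jZ^A_j$, $B_{j+1}=B_jZ^A_j$. Its output is denoted $\mathrm{SSD}(A,B)$. P-SSD algorithm: at iteration $k\ge1$ the digraph $G_k$ is used; an edge $(j,i)\in E_k$ means $j$ is an in-neighbor of $i$, and $\mathcal{N}_{\mathrm{in}}^k(i)$ denotes the in-neighbors of $i$ in $G_k$. Each agent $i$ sets $C_0^i=I_{N_d}$, $\mathrm{flag}_0^i=0$, and for $k=1,2,\dots$: receives $C_{k-1}^j$ for $j\in\mathcal{N}_{\mathrm{in}}^k(i)$; sets $D_k^i=\mathrm{basis}\big(\bigcap_{j\in\{i\}\cup\mathcal{N}_{\mathrm{in}}^k(i)}\mathcal{R}(C_{k-1}^j)\big)$; sets $E_k^i=\mathrm{SSD}(D(X_i)D_k^i,D(Y_i)D_k^i)$; if the number of columns of $D_k^iE_k^i$ is strictly less than that of $C_{k-1}^i$, sets $C_k^i=D_k^iE_k^i$ and $\mathrm{flag}_k^i=0$; otherwise sets $C_k^i=C_{k-1}^i$ and $\mathrm{flag}_k^i=1$; then transmits $C_k^i$ to its out-neighbors. Here $\mathrm{basis}(\mathcal{A})$ returns a matrix whose columns form a basis of the subspace $\mathcal{A}$, and returns $0$ if $\mathcal{A}=\{0\}$; the matrix $0$ is regarded as having $0$ columns. $\mathcal{R}(\cdot)$ denotes range space. A node is globally reachable if there is a directed path from every other node to it; $\mathrm{dist}(j,i)$ is the length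 of a shortest directed path from $j$ to $i$ (with $\mathrm{dist}(i,i)=0$). *)

theory Defs
  imports "Jordan_Normal_Form.Matrix_Kernel"
begin

definition colspace :: "real mat \<Rightarrow> real vec set" where
  "colspace A = {A *\<^sub>v x | x. x \<in> carrier_vec (dim_col A)}"

definition full_col_rank :: "real mat \<Rightarrow> bool" where
  "full_col_rank A \<longleftrightarrow>
     (\<forall>x \<in> carrier_vec (dim_col A). A *\<^sub>v x = 0\<^sub>v (dim_row A) \<longrightarrow> x = 0\<^sub>v (dim_col A))"

(* the columns of Z (Z has n rows) form a basis of the subspace S of R^n;
   a matrix with 0 columns is the basis of {0} (the convention "basis({0}) = 0") *)
definition is_basis_mat :: "nat \<Rightarrow> real mat \<Rightarrow> real vec set \<Rightarrow> bool" where
  "is_basis_mat n Z S \<longleftrightarrow> dim_row Z = n \<and> colspace Z = S \<and> full_col_rank Z"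

definition hcat :: "real mat \<Rightarrow> real mat \<Rightarrow> real mat" where
  "hcat A B = mat (dim_row A) (dim_col A + dim_col B)
      (\<lambda>(r, c). if c < dim_col A then A $$ (r, c) else B $$ (r, c - dim_col A))"

definition top_rows :: "nat \<Rightarrow> real mat \<Rightarrow> real mat" where
  "top_rows q Z = mat q (dim_col Z) (\<lambda>(r, c). Z $$ (r, c))"

(* ssd_loop A B C R: starting from the current (A_j, B_j) with accumulated matrix C,
   the SSD iteration (with any admissible choice of null-space bases) may return R. *)
inductive ssd_loop :: "real mat \<Rightarrow> real mat \<Rightarrow> real mat \<Rightarrow> real mat \<Rightarrow> bool" where
  trivial: "mat_kernel (hcat A B) = {0\<^sub>v (dim_col A + dim_col B)} \<Longrightarrow>
            ssd_loop A B C (0\<^sub>m (dim_row C) 0)"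
| stop: "mat_kernel (hcat A B) \<noteq> {0\<^sub>v (dim_col A + dim_col B)} \<Longrightarrow>
         is_basis_mat (dim_col A + dim_col B) Z (mat_kernel (hcat A B)) \<Longrightarrow>
         dim_col A \<le> dim_col Z \<Longrightarrow>
         ssd_loop A B C C"
| step: "mat_kernel (hcat A B) \<noteq> {0\<^sub>v (dim_col A + dim_col B)} \<Longrightarrow>
         is_basis_mat (dim_col A + dim_col B) Z (mat_kernel (hcat A B)) \<Longrightarrow>
         \<not> dim_col A \<le> dim_col Z \<Longrightarrow>
         ssd_loop (A * top_rows (dim_col A) Z) (B * top_rows (dim_col A) Z)
                  (C * top_rows (dim_col A) Z) R \<Longrightarrow>
         ssd_loop A B C R"

definition ssd :: "real mat \<Rightarrow> real mat \<Rightarrow> real mat \<Rightarrow> bool" where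
  "ssd A B R \<longleftrightarrow> ssd_loop A B (1\<^sub>m (dim_col A)) R"

definition row_pairs :: "real mat \<Rightarrow> real mat \<Rightarrow> (real vec \<times> real vec) set" where
  "row_pairs A B = {(row A r, row B r) | r. r < dim_row A}"

(* constant digraph on agents {0..<M}: E j i means (j,i) is an edge, i.e. j is an in-neighbour of i *)
definition edge_rel :: "nat \<Rightarrow> (nat \<Rightarrow> nat \<Rightarrow> bool) \<Rightarrow> (nat \<times> nat) set" where
  "edge_rel M E = {(j, i). j < M \<and> i < M \<and> E j i}"

definition in_nbrs :: "nat \<Rightarrow> (nat \<Rightarrow> nat \<Rightarrow> bool) \<Rightarrow> nat \<Rightarrow> nat set" where
  "in_nbrs M E i = {j. j < M \<and> E j i}"

definition globally_reachable :: "nat \<Rightarrow> (nat \<Rightarrow> nat \<Rightarrow> bool) \<Rightarrow> nat \<Rightarrow> bool" where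
  "globally_reachable M E i \<longleftrightarrow> i < M \<and> (\<forall>j < M. (j, i) \<in> (edge_rel M E)\<^sup>*)"

definition dist :: "nat \<Rightarrow> (nat \<Rightarrow> nat \<Rightarrow> bool) \<Rightarrow> nat \<Rightarrow> nat \<Rightarrow> nat" where
  "dist M E j i = (LEAST n. (j, i) \<in> (edge_rel M E) ^^ n)"

(* C is an execution of P-SSD over the constant digraph E (C k i = C_k^i), with any admissible
   choice of bases and SSD outputs.  Agent i holds DXl i, DYl i.  The flags do not affect C. *)
definition pssd_run :: "nat \<Rightarrow> nat \<Rightarrow> (nat \<Rightarrow> nat \<Rightarrow> bool) \<Rightarrow> (nat \<Rightarrow> real mat) \<Rightarrow> (nat \<Rightarrow> real mat)
                        \<Rightarrow> (nat \<Rightarrow> nat \<Rightarrow> real mat) \<Rightarrow> bool" where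
  "pssd_run Nd M E DXl DYl C \<longleftrightarrow>
     (\<forall>i < M. C 0 i = 1\<^sub>m Nd) \<and>
     (\<forall>k i. k \<ge> 1 \<longrightarrow> i < M \<longrightarrow>
        (\<exists>Dk Ek. is_basis_mat Nd Dk (\<Inter>j \<in> insert i (in_nbrs M E i). colspace (C (k - 1) j)) \<and>
                 ssd (DXl i * Dk) (DYl i * Dk) Ek \<and>
                 C k i = (if dim_col (Dk * Ek) < dim_col (C (k - 1) i) then Dk * Ek
                          else C (k - 1) i)))"

end

(*
  Started from a matrix C instead of the identity, SSD(A, B) (B of full column rank) returns a
  basis of the greatest set S inside R(C) with A S contained in B S: each step replaces C by C Z_A, whose range is
  C {x. A C x in R(B C)}, and every such S inside R(C) already lies there.  Hence the P-SSD
  iterates satisfy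

    R(C_{k+1}^i) = greatest (D(X_i), D(Y_i))-invariant subset of the intersection of the R(C_k^j),
                   j ranging over i and its in-neighbours,

  also when C_k^i is kept, because the candidate's range is contained in R(C_k^i) and has at least
  as many independent columns.  So the ranges shrink along edges, any set invariant for all agents,
  in particular R(C_SSD), stays inside every R(C_k^j), and R(C_{k+1}^i) is invariant for agent i.
  If k > dist(j, i) for all j, then R(C_k^i) lies inside a range that is invariant for agent j.
  All agents share the signature rows and D(Y_s) has full column rank, so the w with
  D(X_j) v = D(Y_j) w does not depend on j; as the local rows cover those of (D(X), D(Y)),
  R(C_k^i) is invariant for (D(X), D(Y)) and therefore contained in R(C_SSD).
*)

theory Submission
  imports Defs
begin

lemma full_col_rankD:
  assumes "full_col_rank A" "A \<in> carrier_mat m n" "x \<in> carrier_vec n" "A *\<^sub>v x = 0\<^sub>v m"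
  shows "x = 0\<^sub>v n"
  using assms unfolding full_col_rank_def by auto

lemma mult_mat_vec_zero: "A \<in> carrier_mat m n \<Longrightarrow> A *\<^sub>v 0\<^sub>v n = (0\<^sub>v m :: real vec)"
  by (intro eq_vecI) auto

lemma full_col_rank_one_mat: "full_col_rank (1\<^sub>m n :: real mat)"
  unfolding full_col_rank_def by auto

lemma full_col_rank_mult:
  fixes A B :: "real mat"
  assumes A: "A \<in> carrier_mat n p" and B: "B \<in> carrier_mat p q"
    and "full_col_rank A" "full_col_rank B"
  shows "full_col_rank (A * B)"
  unfolding full_col_rank_def
proof (intro ballI impI)
  fix x assume x: "x \<in> carrier_vec (dim_col (A * B))" and "A * B *\<^sub>v x = 0\<^sub>v (dim_row (A * B))"
  then have "A *\<^sub>v (B *\<^sub>v x) = 0\<^sub>v n" using A B by auto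
  then have "B *\<^sub>v x = 0\<^sub>v p" using full_col_rankD[OF \<open>full_col_rank A\<close> A] B x by auto
  then show "x = 0\<^sub>v (dim_col (A * B))" using full_col_rankD[OF \<open>full_col_rank B\<close> B] A B x by auto
qed

lemma full_col_rank_inj:
  fixes A :: "real mat"
  assumes A: "A \<in> carrier_mat m n" and "full_col_rank A"
    and w: "w \<in> carrier_vec n" and w': "w' \<in> carrier_vec n" and "A *\<^sub>v w = A *\<^sub>v w'"
  shows "w = w'"
proof -
  have "A *\<^sub>v (w - w') = 0\<^sub>v m"
    using A w w' \<open>A *\<^sub>v w = A *\<^sub>v w'\<close> by (simp add: mult_minus_distrib_mat_vec)
  then have "w - w' = 0\<^sub>v n" using full_col_rankD[OF \<open>full_col_rank A\<close> A] w w' by auto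
  then have "(w - w') $ i = 0" if "i < n" for i using that by simp
  then show ?thesis using w w' by (intro eq_vecI) auto
qed

lemma full_col_rank_dim_col_le:
  fixes A :: "real mat"
  assumes A: "A \<in> carrier_mat m n" and "full_col_rank A"
  shows "n \<le> m"
proof (rule ccontr)
  assume "\<not> n \<le> m"
  define A' where "A' = mat n n (\<lambda>(r, c). if r < m then A $$ (r, c) else 0)"
  have A': "A' \<in> carrier_mat n n" unfolding A'_def by auto
  have "A' = mat\<^sub>r n n (\<lambda>r. if r = n - 1 then 0\<^sub>v n else row A' r)"
    using \<open>\<not> n \<le> m\<close> by (intro eq_matI) (auto simp: A'_def)
  then have "det A' = 0" using det_row_0[of "n - 1" n "row A'"] \<open>\<not> n \<le> m\<close> A' by auto
  then obtain v where v: "v \<in> carrier_vec n" "v \<noteq> 0\<^sub>v n" "A' *\<^sub>v v = 0\<^sub>v n"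
    using det_0_iff_vec_prod_zero[OF A'] by auto
  have "A *\<^sub>v v = 0\<^sub>v m"
  proof (rule eq_vecI)
    fix r assume "r < dim_vec (0\<^sub>v m :: real vec)"
    then have "(A *\<^sub>v v) $ r = (A' *\<^sub>v v) $ r"
      using A v(1) \<open>\<not> n \<le> m\<close> by (auto simp: A'_def scalar_prod_def row_def)
    then show "(A *\<^sub>v v) $ r = 0\<^sub>v m $ r" using v(3) \<open>r < dim_vec (0\<^sub>v m)\<close> \<open>\<not> n \<le> m\<close> by auto
  qed (use A in auto)
  then show False using full_col_rankD[OF \<open>full_col_rank A\<close> A v(1)] v(2) by simp
qed

lemma full_col_rank_right_factor:
  fixes A B :: "real mat"
  assumes A: "A \<in> carrier_mat m n" and B: "B \<in> carrier_mat n p" and "full_col_rank (A * B)"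
  shows "full_col_rank B"
  unfolding full_col_rank_def
proof (intro ballI impI)
  fix x assume x: "x \<in> carrier_vec (dim_col B)" and "B *\<^sub>v x = 0\<^sub>v (dim_row B)"
  then have "(A * B) *\<^sub>v x = 0\<^sub>v m" using A B x by (simp add: assoc_mult_mat_vec mult_mat_vec_zero)
  then show "x = 0\<^sub>v (dim_col B)"
    using full_col_rankD[OF \<open>full_col_rank (A * B)\<close> mult_carrier_mat[OF A B]] B x by auto
qed

lemma colspaceI: "A \<in> carrier_mat n p \<Longrightarrow> x \<in> carrier_vec p \<Longrightarrow> A *\<^sub>v x \<in> colspace A"
  unfolding colspace_def by auto

lemma colspaceE:
  assumes "v \<in> colspace A" "A \<in> carrier_mat n p"
  obtains x where "x \<in> carrier_vec p" "v = A *\<^sub>v x"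
  using assms unfolding colspace_def by auto

lemma colspace_eq_image: "A \<in> carrier_mat n p \<Longrightarrow> colspace A = (\<lambda>x. A *\<^sub>v x) ` carrier_vec p"
  unfolding colspace_def by auto

lemma colspace_carrier: "A \<in> carrier_mat n p \<Longrightarrow> colspace A \<subseteq> carrier_vec n"
  unfolding colspace_def by auto

lemma colspace_one_mat: "colspace (1\<^sub>m n :: real mat) = carrier_vec n"
  unfolding colspace_def by force

lemma colspace_zero_cols: "colspace (0\<^sub>m n 0 :: real mat) = {0\<^sub>v n}"
proof -
  have "0\<^sub>m n 0 *\<^sub>v x = (0\<^sub>v n :: real vec)" if "x \<in> carrier_vec 0" for x
    using that by (intro eq_vecI) (auto simp: scalar_prod_def)
  then show ?thesis unfolding colspace_def by (auto intro!: exI[of _ "0\<^sub>v 0"])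
qed

lemma colspace_mult:
  assumes A: "A \<in> carrier_mat n p" and B: "B \<in> carrier_mat p q"
  shows "colspace (A * B) = (\<lambda>x. A *\<^sub>v x) ` colspace B"
proof -
  have "colspace (A * B) = (\<lambda>x. A *\<^sub>v (B *\<^sub>v x)) ` carrier_vec q"
    using A B by (auto simp: colspace_eq_image[of _ n q] assoc_mult_mat_vec intro!: image_cong)
  then show ?thesis using B by (simp add: colspace_eq_image[OF B] image_image)
qed

lemma colspace_mult_subset:
  assumes "A \<in> carrier_mat n p" "B \<in> carrier_mat p q"
  shows "colspace (A * B) \<subseteq> colspace A"
  using assms by (auto simp: colspace_mult colspace_def)

lemma colspace_square_full_col_rank:
  fixes A :: "real mat"
  assumes A: "A \<in> carrier_mat n n" and "full_col_rank A"
  shows "colspace A = carrier_vec n"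
proof -
  have "det A \<noteq> 0"
    using det_0_iff_vec_prod_zero[OF A] full_col_rankD[OF \<open>full_col_rank A\<close> A] by auto
  then obtain P where P: "P \<in> carrier_mat n n" "A * P = 1\<^sub>m n"
    using det_non_zero_imp_unit[OF A] unfolding Units_def ring_mat_def by auto
  then have "carrier_vec n \<subseteq> colspace A"
    using colspace_mult_subset[OF A P(1)] by (simp add: colspace_one_mat)
  then show ?thesis using colspace_carrier[OF A] by auto
qed

lemma colspace_subset_factor:
  fixes M1 M2 :: "real mat"
  assumes M1: "M1 \<in> carrier_mat n p" and M2: "M2 \<in> carrier_mat n q"
    and sub: "colspace M1 \<subseteq> colspace M2"
  obtains X where "X \<in> carrier_mat q p" "M1 = M2 * X"
proof -
  have "\<exists>x \<in> carrier_vec q. col M1 c = M2 *\<^sub>v x" if c: "c < p" for c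
  proof -
    have "col M1 c = M1 *\<^sub>v unit_vec p c" using M1 c by (intro eq_vecI) auto
    then have "col M1 c \<in> colspace M2" using sub colspaceI[OF M1 unit_vec_carrier] by auto
    then show ?thesis using M2 by (auto elim: colspaceE)
  qed
  then obtain xs where xs: "\<And>c. c < p \<Longrightarrow> xs c \<in> carrier_vec q \<and> col M1 c = M2 *\<^sub>v xs c"
    by metis
  define X where "X = mat q p (\<lambda>(a, c). xs c $ a)"
  have X: "X \<in> carrier_mat q p" unfolding X_def by auto
  have "col X c = xs c" if "c < p" for c
    using xs[OF that] that unfolding X_def by (intro eq_vecI) auto
  then have "M1 = M2 * X"
    using M1 M2 X xs by (intro mat_col_eqI) (auto simp: col_mult2)
  with X show thesis by (rule that)
qed

lemma colspace_eq_if_subset_dim_col_le: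
  fixes M1 M2 :: "real mat"
  assumes M1: "M1 \<in> carrier_mat n p" and "full_col_rank M1" and M2: "M2 \<in> carrier_mat n q"
    and sub: "colspace M1 \<subseteq> colspace M2" and "q \<le> p"
  shows "colspace M1 = colspace M2"
proof -
  obtain X where X: "X \<in> carrier_mat q p" and M1X: "M1 = M2 * X"
    using colspace_subset_factor[OF M1 M2 sub] .
  have "full_col_rank X" using full_col_rank_right_factor[OF M2 X] \<open>full_col_rank M1\<close> M1X by simp
  then have "p = q" using full_col_rank_dim_col_le[OF X] \<open>q \<le> p\<close> by simp
  then have "colspace X = carrier_vec q"
    using colspace_square_full_col_rank X \<open>full_col_rank X\<close> by simp
  then show ?thesis using M1X colspace_mult[OF M2 X] M2 by (auto simp: colspace_def)
qed

lemma hcat_carrier: "A \<in> carrier_mat m p \<Longrightarrow> B \<in> carrier_mat m q \<Longrightarrow> hcat A B \<in> carrier_mat m (p + q)"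
  unfolding hcat_def by auto

lemma hcat_mult_append_vec:
  assumes A: "A \<in> carrier_mat m p" and B: "B \<in> carrier_mat m q"
    and x: "x \<in> carrier_vec p" and y: "y \<in> carrier_vec q"
  shows "hcat A B *\<^sub>v (x @\<^sub>v y) = A *\<^sub>v x + B *\<^sub>v y"
proof (rule eq_vecI)
  fix r assume "r < dim_vec (A *\<^sub>v x + B *\<^sub>v y)"
  then have r: "r < m" using B by simp
  have "row (hcat A B) r = row A r @\<^sub>v row B r"
    using A B r by (intro eq_vecI) (auto simp: hcat_def)
  then show "(hcat A B *\<^sub>v (x @\<^sub>v y)) $ r = (A *\<^sub>v x + B *\<^sub>v y) $ r"
    using A B x y r hcat_carrier[OF A B] by (simp add: scalar_prod_append[of _ p _ q])
qed (use A B hcat_carrier[OF A B] in auto)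

lemma mult_mat_vec_uminus:
  fixes B :: "real mat"
  assumes "B \<in> carrier_mat m q" "y \<in> carrier_vec q"
  shows "B *\<^sub>v (- y) = - (B *\<^sub>v y)"
  using assms by (intro eq_vecI) (auto simp: scalar_prod_def sum_negf[symmetric])

lemma append_uminus_mem_kernel_hcat_iff:
  fixes A B :: "real mat"
  assumes A: "A \<in> carrier_mat m p" and B: "B \<in> carrier_mat m q"
    and x: "x \<in> carrier_vec p" and y: "y \<in> carrier_vec q"
  shows "x @\<^sub>v (- y) \<in> mat_kernel (hcat A B) \<longleftrightarrow> A *\<^sub>v x = B *\<^sub>v y"
proof -
  have "hcat A B *\<^sub>v (x @\<^sub>v (- y)) = A *\<^sub>v x + - (B *\<^sub>v y)"
    using hcat_mult_append_vec[OF A B x] mult_mat_vec_uminus[OF B y] y by simp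
  moreover have "A *\<^sub>v x + - (B *\<^sub>v y) = 0\<^sub>v m \<longleftrightarrow> A *\<^sub>v x = B *\<^sub>v y"
    using A B by (auto simp: vec_eq_iff)
  ultimately show ?thesis
    using hcat_carrier[OF A B] x y by (auto simp: mat_kernel_def)
qed

lemma mem_kernel_hcat_split:
  fixes A B :: "real mat"
  assumes A: "A \<in> carrier_mat m p" and B: "B \<in> carrier_mat m q"
    and z: "z \<in> mat_kernel (hcat A B)"
  shows "A *\<^sub>v vec_first z p = B *\<^sub>v (- vec_last z q)"
proof -
  have "z \<in> carrier_vec (p + q)" using mat_kernelD(1)[OF hcat_carrier[OF A B] z] .
  then have "vec_first z p @\<^sub>v (- (- vec_last z q)) = z" by simp
  then show ?thesis
    using append_uminus_mem_kernel_hcat_iff[OF A B, of "vec_first z p" "- vec_last z q"] z by simp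
qed

lemma vec_first_append: "x \<in> carrier_vec p \<Longrightarrow> vec_first (x @\<^sub>v y) p = x"
  unfolding vec_first_def by (intro eq_vecI) auto

lemma top_rows_carrier: "Z \<in> carrier_mat n r \<Longrightarrow> top_rows p Z \<in> carrier_mat p r"
  unfolding top_rows_def by auto

lemma top_rows_mult_vec:
  assumes "Z \<in> carrier_mat (p + q) r" "u \<in> carrier_vec r"
  shows "top_rows p Z *\<^sub>v u = vec_first (Z *\<^sub>v u) p"
  using assms by (intro eq_vecI) (auto simp: top_rows_def vec_first_def scalar_prod_def row_def)

lemma colspace_top_rows_kernel_basis:
  fixes A B :: "real mat"
  assumes A: "A \<in> carrier_mat m p" and B: "B \<in> carrier_mat m q"
    and Z: "is_basis_mat (p + q) Z (mat_kernel (hcat A B))"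
  shows "colspace (top_rows p Z) = {x \<in> carrier_vec p. A *\<^sub>v x \<in> colspace B}"
proof -
  obtain r where Zc: "Z \<in> carrier_mat (p + q) r" and kernel: "colspace Z = mat_kernel (hcat A B)"
    using Z unfolding is_basis_mat_def by auto
  have "colspace (top_rows p Z) = (\<lambda>u. vec_first (Z *\<^sub>v u) p) ` carrier_vec r"
    unfolding colspace_eq_image[OF top_rows_carrier[OF Zc]]
    using top_rows_mult_vec[OF Zc] by (intro image_cong) auto
  also have "\<dots> = (\<lambda>z. vec_first z p) ` mat_kernel (hcat A B)"
    unfolding kernel[symmetric] colspace_eq_image[OF Zc] image_image ..
  also have "\<dots> = {x \<in> carrier_vec p. A *\<^sub>v x \<in> colspace B}"
  proof (intro equalityI subsetI)
    fix x assume "x \<in> (\<lambda>z. vec_first z p) ` mat_kernel (hcat A B)"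
    then obtain z where z: "z \<in> mat_kernel (hcat A B)" and x: "x = vec_first z p" by blast
    have "A *\<^sub>v x = B *\<^sub>v (- vec_last z q)" using mem_kernel_hcat_split[OF A B z] x by simp
    then show "x \<in> {x \<in> carrier_vec p. A *\<^sub>v x \<in> colspace B}"
      using colspaceI[OF B, of "- vec_last z q"] x by simp
  next
    fix x assume "x \<in> {x \<in> carrier_vec p. A *\<^sub>v x \<in> colspace B}"
    then obtain y where x: "x \<in> carrier_vec p" and y: "y \<in> carrier_vec q" "A *\<^sub>v x = B *\<^sub>v y"
      using B by (auto elim: colspaceE)
    then have "x @\<^sub>v (- y) \<in> mat_kernel (hcat A B)"
      using append_uminus_mem_kernel_hcat_iff[OF A B x y(1)] by simp
    then show "x \<in> (\<lambda>z. vec_first z p) ` mat_kernel (hcat A B)"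
      using vec_first_append[OF x] by (intro image_eqI[of _ _ "x @\<^sub>v (- y)"]) auto
  qed
  finally show ?thesis .
qed

lemma full_col_rank_top_rows_kernel_basis:
  fixes A B :: "real mat"
  assumes A: "A \<in> carrier_mat m p" and B: "B \<in> carrier_mat m q" and "full_col_rank B"
    and Z: "is_basis_mat (p + q) Z (mat_kernel (hcat A B))"
  shows "full_col_rank (top_rows p Z)"
  unfolding full_col_rank_def
proof (intro ballI impI)
  have Zc: "Z \<in> carrier_mat (p + q) (dim_col Z)" and kernel: "colspace Z = mat_kernel (hcat A B)"
    and "full_col_rank Z"
    using Z unfolding is_basis_mat_def by auto
  fix u assume u: "u \<in> carrier_vec (dim_col (top_rows p Z))"
    and "top_rows p Z *\<^sub>v u = 0\<^sub>v (dim_row (top_rows p Z))"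
  then have u: "u \<in> carrier_vec (dim_col Z)" and first: "vec_first (Z *\<^sub>v u) p = 0\<^sub>v p"
    using top_rows_mult_vec[OF Zc] by (auto simp: top_rows_def)
  have z: "Z *\<^sub>v u \<in> mat_kernel (hcat A B)" using colspaceI[OF Zc u] kernel by simp
  have "B *\<^sub>v (- vec_last (Z *\<^sub>v u) q) = 0\<^sub>v m"
    using mem_kernel_hcat_split[OF A B z] first mult_mat_vec_zero[OF A] by simp
  then have "- vec_last (Z *\<^sub>v u) q = 0\<^sub>v q"
    using full_col_rankD[OF \<open>full_col_rank B\<close> B] by simp
  then have "- vec_last (Z *\<^sub>v u) q = - 0\<^sub>v q" by simp
  then have last: "vec_last (Z *\<^sub>v u) q = 0\<^sub>v q" by (simp only: uminus_eq_vec)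
  have "Z *\<^sub>v u = vec_first (Z *\<^sub>v u) p @\<^sub>v vec_last (Z *\<^sub>v u) q"
    using vec_first_last_append[OF mult_mat_vec_carrier[OF Zc u]] by simp
  also have "\<dots> = 0\<^sub>v p @\<^sub>v 0\<^sub>v q" unfolding first last ..
  also have "\<dots> = 0\<^sub>v (p + q)" by (intro eq_vecI) auto
  finally show "u = 0\<^sub>v (dim_col (top_rows p Z))"
    using full_col_rankD[OF \<open>full_col_rank Z\<close> Zc u] by (simp add: top_rows_def)
qed

lemma trivial_kernel_hcat_preimage_zero:
  fixes A B :: "real mat"
  assumes A: "A \<in> carrier_mat m p" and B: "B \<in> carrier_mat m q"
    and trivial: "mat_kernel (hcat A B) = {0\<^sub>v (p + q)}"
    and x: "x \<in> carrier_vec p" and "A *\<^sub>v x \<in> colspace B"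
  shows "x = 0\<^sub>v p"
proof -
  obtain y where y: "y \<in> carrier_vec q" "A *\<^sub>v x = B *\<^sub>v y"
    using \<open>A *\<^sub>v x \<in> colspace B\<close> B by (auto elim: colspaceE)
  then have "x @\<^sub>v (- y) = 0\<^sub>v (p + q)"
    using append_uminus_mem_kernel_hcat_iff[OF A B x] trivial by auto
  then have "x = vec_first (0\<^sub>v (p + q)) p" using vec_first_append[OF x, of "- y"] by simp
  also have "\<dots> = 0\<^sub>v p" unfolding vec_first_def by (intro eq_vecI) auto
  finally show ?thesis .
qed

(* A S is contained in B S.  For injective A, B such as D(X), D(Y) and S = R(C) this is the
   paper's condition R(D(X) C) = R(D(Y) C). *)
definition rel_invariant :: "real mat \<Rightarrow> real mat \<Rightarrow> real vec set \<Rightarrow> bool" where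
  "rel_invariant A B S \<longleftrightarrow> (\<forall>v \<in> S. \<exists>w \<in> S. A *\<^sub>v v = B *\<^sub>v w)"

definition greatest_rel_invariant :: "real mat \<Rightarrow> real mat \<Rightarrow> real vec set \<Rightarrow> real vec set" where
  "greatest_rel_invariant A B S = \<Union>{T. T \<subseteq> S \<and> rel_invariant A B T}"

lemma rel_invariant_greatest: "rel_invariant A B (greatest_rel_invariant A B S)"
  unfolding rel_invariant_def greatest_rel_invariant_def by blast

lemma greatest_rel_invariant_subset: "greatest_rel_invariant A B S \<subseteq> S"
  unfolding greatest_rel_invariant_def by blast

lemma rel_invariant_subset_greatest:
  "T \<subseteq> S \<Longrightarrow> rel_invariant A B T \<Longrightarrow> T \<subseteq> greatest_rel_invariant A B S"
  unfolding greatest_rel_invariant_def by blast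

lemma greatest_rel_invariant_eq_self:
  "rel_invariant A B S \<Longrightarrow> greatest_rel_invariant A B S = S"
  using rel_invariant_subset_greatest[of S S A B] greatest_rel_invariant_subset[of A B S] by auto

lemma greatest_rel_invariant_eq:
  assumes "S' \<subseteq> S" and "\<And>T. T \<subseteq> S \<Longrightarrow> rel_invariant A B T \<Longrightarrow> T \<subseteq> S'"
  shows "greatest_rel_invariant A B S' = greatest_rel_invariant A B S"
proof (rule antisym)
  show "greatest_rel_invariant A B S' \<subseteq> greatest_rel_invariant A B S"
    using greatest_rel_invariant_subset \<open>S' \<subseteq> S\<close>
    by (intro rel_invariant_subset_greatest rel_invariant_greatest) blast
  show "greatest_rel_invariant A B S \<subseteq> greatest_rel_invariant A B S'"
    using assms(2)[OF greatest_rel_invariant_subset rel_invariant_greatest]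
    by (intro rel_invariant_subset_greatest rel_invariant_greatest)
qed

lemma rel_invariant_subset_colspace_image:
  fixes A B C :: "real mat"
  assumes A: "A \<in> carrier_mat m n" and B: "B \<in> carrier_mat m n" and C: "C \<in> carrier_mat n p"
    and T: "T \<subseteq> colspace C" "rel_invariant A B T"
  shows "T \<subseteq> (\<lambda>x. C *\<^sub>v x) ` {x \<in> carrier_vec p. (A * C) *\<^sub>v x \<in> colspace (B * C)}"
proof
  fix v assume "v \<in> T"
  then obtain w where "w \<in> T" "A *\<^sub>v v = B *\<^sub>v w" using T(2) unfolding rel_invariant_def by blast
  moreover obtain x where x: "x \<in> carrier_vec p" "v = C *\<^sub>v x"
    using T(1) \<open>v \<in> T\<close> C by (blast elim: colspaceE)
  moreover obtain y where y: "y \<in> carrier_vec p" "w = C *\<^sub>v y"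
    using T(1) \<open>w \<in> T\<close> C by (blast elim: colspaceE)
  ultimately have "(A * C) *\<^sub>v x = (B * C) *\<^sub>v y" using A B C by (simp add: assoc_mult_mat_vec)
  then have "(A * C) *\<^sub>v x \<in> colspace (B * C)" using colspaceI[OF mult_carrier_mat[OF B C] y(1)] by simp
  then show "v \<in> (\<lambda>x. C *\<^sub>v x) ` {x \<in> carrier_vec p. (A * C) *\<^sub>v x \<in> colspace (B * C)}"
    using x by blast
qed

lemma rel_invariant_colspace:
  fixes A B C :: "real mat"
  assumes A: "A \<in> carrier_mat m n" and B: "B \<in> carrier_mat m n" and C: "C \<in> carrier_mat n p"
    and "\<And>x. x \<in> carrier_vec p \<Longrightarrow> (A * C) *\<^sub>v x \<in> colspace (B * C)"
  shows "rel_invariant A B (colspace C)"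
  unfolding rel_invariant_def
proof
  fix v assume "v \<in> colspace C"
  then obtain x where x: "x \<in> carrier_vec p" "v = C *\<^sub>v x" using C by (rule colspaceE)
  from x(1) have "(A * C) *\<^sub>v x \<in> colspace (B * C)" by (rule assms(4))
  then obtain y where y: "y \<in> carrier_vec p" "(A * C) *\<^sub>v x = (B * C) *\<^sub>v y"
    using mult_carrier_mat[OF B C] by (rule colspaceE)
  then have "A *\<^sub>v v = B *\<^sub>v (C *\<^sub>v y)" using x A B C by (simp add: assoc_mult_mat_vec)
  then show "\<exists>w \<in> colspace C. A *\<^sub>v v = B *\<^sub>v w" using colspaceI[OF C y(1)] by blast
qed

lemma greatest_rel_invariant_trivial_kernel:
  fixes A B C :: "real mat"
  assumes A: "A \<in> carrier_mat m n" and B: "B \<in> carrier_mat m n" and C: "C \<in> carrier_mat n p"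
    and trivial: "mat_kernel (hcat (A * C) (B * C)) = {0\<^sub>v (p + p)}"
  shows "greatest_rel_invariant A B (colspace C) = {0\<^sub>v n}"
proof -
  have "greatest_rel_invariant A B (colspace C) = greatest_rel_invariant A B {0\<^sub>v n}"
  proof (rule greatest_rel_invariant_eq[symmetric])
    show "{0\<^sub>v n} \<subseteq> colspace C"
      using colspaceI[OF C zero_carrier_vec] mult_mat_vec_zero[OF C] by simp
    fix T assume "T \<subseteq> colspace C" "rel_invariant A B T"
    then have "T \<subseteq> (\<lambda>x. C *\<^sub>v x) ` {x \<in> carrier_vec p. (A * C) *\<^sub>v x \<in> colspace (B * C)}"
      by (rule rel_invariant_subset_colspace_image[OF A B C])
    also have "\<dots> \<subseteq> {0\<^sub>v n}"
      using trivial_kernel_hcat_preimage_zero[OF mult_carrier_mat[OF A C] mult_carrier_mat[OF B C] trivial]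
        mult_mat_vec_zero[OF C] by auto
    finally show "T \<subseteq> {0\<^sub>v n}" .
  qed
  also have "\<dots> = {0\<^sub>v n}"
    using mult_mat_vec_zero A B by (intro greatest_rel_invariant_eq_self) (auto simp: rel_invariant_def)
  finally show ?thesis .
qed

lemma rel_invariant_colspace_wide_kernel_basis:
  fixes A B C :: "real mat"
  assumes A: "A \<in> carrier_mat m n" and B: "B \<in> carrier_mat m n" and C: "C \<in> carrier_mat n p"
    and "full_col_rank (B * C)"
    and Z: "is_basis_mat (p + p) Z (mat_kernel (hcat (A * C) (B * C)))" and "p \<le> dim_col Z"
  shows "rel_invariant A B (colspace C)"
proof -
  have T: "top_rows p Z \<in> carrier_mat p (dim_col Z)" by (simp add: top_rows_def)
  have "full_col_rank (top_rows p Z)"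
    using full_col_rank_top_rows_kernel_basis[OF mult_carrier_mat[OF A C] mult_carrier_mat[OF B C]
        \<open>full_col_rank (B * C)\<close> Z] .
  moreover from this have "dim_col Z = p"
    using full_col_rank_dim_col_le[OF T] \<open>p \<le> dim_col Z\<close> by simp
  ultimately have "colspace (top_rows p Z) = carrier_vec p"
    using colspace_square_full_col_rank T by simp
  then have "{x \<in> carrier_vec p. (A * C) *\<^sub>v x \<in> colspace (B * C)} = carrier_vec p"
    using colspace_top_rows_kernel_basis[OF mult_carrier_mat[OF A C] mult_carrier_mat[OF B C] Z]
    by simp
  then show ?thesis by (intro rel_invariant_colspace[OF A B C]) blast
qed

lemma greatest_rel_invariant_colspace_mult_top_rows:
  fixes A B C :: "real mat"
  assumes A: "A \<in> carrier_mat m n" and B: "B \<in> carrier_mat m n" and C: "C \<in> carrier_mat n p"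
    and Z: "is_basis_mat (p + p) Z (mat_kernel (hcat (A * C) (B * C)))"
  shows "greatest_rel_invariant A B (colspace (C * top_rows p Z)) =
    greatest_rel_invariant A B (colspace C)"
proof (rule greatest_rel_invariant_eq)
  have T: "top_rows p Z \<in> carrier_mat p (dim_col Z)" by (simp add: top_rows_def)
  show "colspace (C * top_rows p Z) \<subseteq> colspace C" by (rule colspace_mult_subset[OF C T])
  fix S assume "S \<subseteq> colspace C" "rel_invariant A B S"
  then have "S \<subseteq> (\<lambda>x. C *\<^sub>v x) ` {x \<in> carrier_vec p. (A * C) *\<^sub>v x \<in> colspace (B * C)}"
    by (rule rel_invariant_subset_colspace_image[OF A B C])
  then show "S \<subseteq> colspace (C * top_rows p Z)"
    using colspace_top_rows_kernel_basis[OF mult_carrier_mat[OF A C] mult_carrier_mat[OF B C] Z]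
      colspace_mult[OF C T] by simp
qed

lemma full_col_rank_zero_cols: "full_col_rank (0\<^sub>m n 0)"
  unfolding full_col_rank_def by auto

lemma ssd_loop_mult_left:
  assumes "ssd_loop A B C R" "dim_col C = dim_col A" "D \<in> carrier_mat k (dim_row C)"
  shows "ssd_loop A B (D * C) (D * R)"
  using assms
proof (induction rule: ssd_loop.induct)
  case (trivial A B C)
  then have "D * 0\<^sub>m (dim_row C) 0 = 0\<^sub>m (dim_row (D * C)) 0" by auto
  then show ?case using ssd_loop.trivial[OF trivial.hyps, of "D * C"] by simp
next
  case (stop A B Z C)
  show ?case by (rule ssd_loop.stop[OF stop.hyps])
next
  case (step A B Z C R)
  let ?T = "top_rows (dim_col A) Z"
  have "ssd_loop (A * ?T) (B * ?T) (D * (C * ?T)) (D * R)"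
    using step.prems by (intro step.IH) (auto simp: top_rows_def)
  moreover have "D * (C * ?T) = D * C * ?T"
    using step.prems by (intro assoc_mult_mat[symmetric]) (auto simp: top_rows_def)
  ultimately show ?case using ssd_loop.step[OF step.hyps(1-3)] by simp
qed

lemma ssd_loop_colspace:
  assumes "ssd_loop A B C R"
    and "A0 \<in> carrier_mat m n" "B0 \<in> carrier_mat m n" "full_col_rank B0"
    and "C \<in> carrier_mat n p" "full_col_rank C" "A = A0 * C" "B = B0 * C"
  shows "R \<in> carrier_mat n (dim_col R) \<and> full_col_rank R \<and>
    colspace R = greatest_rel_invariant A0 B0 (colspace C)"
  using assms
proof (induction arbitrary: p rule: ssd_loop.induct)
  case (trivial A B C)
  then have "mat_kernel (hcat (A0 * C) (B0 * C)) = {0\<^sub>v (p + p)}" by simp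
  then show ?case
    using greatest_rel_invariant_trivial_kernel trivial.prems colspace_zero_cols
      full_col_rank_zero_cols by auto
next
  case (stop A B Z C)
  then have "is_basis_mat (p + p) Z (mat_kernel (hcat (A0 * C) (B0 * C)))" "p \<le> dim_col Z"
    and "full_col_rank (B0 * C)" using full_col_rank_mult by auto
  then have "rel_invariant A0 B0 (colspace C)"
    using rel_invariant_colspace_wide_kernel_basis stop.prems by blast
  then show ?case using greatest_rel_invariant_eq_self stop.prems by auto
next
  case (step A B Z C R)
  define T where "T = top_rows p Z"
  have Z: "is_basis_mat (p + p) Z (mat_kernel (hcat (A0 * C) (B0 * C)))"
    and T_eq: "top_rows (dim_col A) Z = T" using step.hyps(2) step.prems by (auto simp: T_def)
  have T: "T \<in> carrier_mat p (dim_col Z)" by (simp add: T_def top_rows_def)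
  have "full_col_rank T"
    unfolding T_def using step.prems(1-5)
    by (intro full_col_rank_top_rows_kernel_basis[OF _ _ full_col_rank_mult Z]) auto
  then have "C * T \<in> carrier_mat n (dim_col Z)" "full_col_rank (C * T)"
    using full_col_rank_mult T step.prems by auto
  moreover have "A * T = A0 * (C * T)" "B * T = B0 * (C * T)"
    using step.prems T by (simp_all add: assoc_mult_mat[of _ m n _ p])
  ultimately show ?case
    using step.IH[OF step.prems(1-3), unfolded T_eq] step.prems T_def
      greatest_rel_invariant_colspace_mult_top_rows[OF _ _ _ Z] by simp
qed

lemma ssd_colspace:
  assumes "ssd A B R" "A \<in> carrier_mat m n" "B \<in> carrier_mat m n" "full_col_rank B"
  shows "colspace R = greatest_rel_invariant A B (carrier_vec n)"
proof -
  have "ssd_loop A B (1\<^sub>m n) R" using assms(1,2) unfolding ssd_def by simp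
  then show ?thesis
    using ssd_loop_colspace[of A B "1\<^sub>m n" R A m n B n] assms(2-4) full_col_rank_one_mat
    by (simp add: colspace_one_mat)
qed

lemma ssd_mult_colspace:
  assumes "ssd (A * D) (B * D) E" "A \<in> carrier_mat m n" "B \<in> carrier_mat m n" "full_col_rank B"
    and D: "D \<in> carrier_mat n d" "full_col_rank D"
  shows "D * E \<in> carrier_mat n (dim_col (D * E))" "full_col_rank (D * E)"
    and "colspace (D * E) = greatest_rel_invariant A B (colspace D)"
proof -
  have "ssd_loop (A * D) (B * D) (1\<^sub>m d) E" using assms(1,2) D unfolding ssd_def by simp
  then have "ssd_loop (A * D) (B * D) (D * 1\<^sub>m d) (D * E)"
    using assms(2) D by (intro ssd_loop_mult_left) auto
  then have "ssd_loop (A * D) (B * D) D (D * E)" using D(1) by simp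
  from ssd_loop_colspace[OF this assms(2-4) D refl refl]
  show "D * E \<in> carrier_mat n (dim_col (D * E))" "full_col_rank (D * E)"
    and "colspace (D * E) = greatest_rel_invariant A B (colspace D)" by simp_all
qed

lemma row_pairs_mult_vec_eq:
  assumes "(row A r, row B r) \<in> row_pairs A' B'" "r < dim_row A" "r < dim_row B"
    and "dim_row B' = dim_row A'" and "A' *\<^sub>v v = B' *\<^sub>v w"
  shows "(A *\<^sub>v v) $ r = (B *\<^sub>v w) $ r"
proof -
  obtain r' where r': "r' < dim_row A'" "row A r = row A' r'" "row B r = row B' r'"
    using assms(1) unfolding row_pairs_def by auto
  have "(A *\<^sub>v v) $ r = (A' *\<^sub>v v) $ r'" using assms(2) r' by simp
  also have "\<dots> = (B' *\<^sub>v w) $ r'" using assms(5) by simp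
  also have "\<dots> = (B *\<^sub>v w) $ r" using assms(3,4) r' by simp
  finally show ?thesis .
qed

lemma mult_vec_eq_of_row_pairs_cover:
  assumes cover: "row_pairs A B \<subseteq> (\<Union>a \<in> I. row_pairs (A' a) (B' a))"
    and "dim_row B = dim_row A" and "\<forall>a \<in> I. dim_row (B' a) = dim_row (A' a)"
    and eq: "\<forall>a \<in> I. A' a *\<^sub>v v = B' a *\<^sub>v w"
  shows "A *\<^sub>v v = B *\<^sub>v w"
proof (rule eq_vecI)
  fix r assume "r < dim_vec (B *\<^sub>v w)"
  then have r: "r < dim_row A" "r < dim_row B" using assms(2) by auto
  then obtain a where "a \<in> I" "(row A r, row B r) \<in> row_pairs (A' a) (B' a)"
    using cover unfolding row_pairs_def by blast
  then show "(A *\<^sub>v v) $ r = (B *\<^sub>v w) $ r"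
    using row_pairs_mult_vec_eq r assms(3) eq by blast
qed (use assms(2) in simp)

lemma mult_vec_eq_of_row_pairs_subset:
  assumes "row_pairs A B \<subseteq> row_pairs A' B'"
    and "dim_row B = dim_row A" and "dim_row B' = dim_row A'" and "A' *\<^sub>v v = B' *\<^sub>v w"
  shows "A *\<^sub>v v = B *\<^sub>v w"
  using mult_vec_eq_of_row_pairs_cover[where I = "{()}" and A' = "\<lambda>_. A'" and B' = "\<lambda>_. B'"]
    assms by simp

lemma rel_invariant_of_row_pairs_subset:
  assumes "row_pairs A B \<subseteq> row_pairs A' B'"
    and "dim_row B = dim_row A" and "dim_row B' = dim_row A'" and "rel_invariant A' B' S"
  shows "rel_invariant A B S"
  using assms mult_vec_eq_of_row_pairs_subset unfolding rel_invariant_def by metis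

lemma full_col_rank_of_row_pairs_subset:
  fixes A B A' B' :: "real mat"
  assumes "row_pairs A B \<subseteq> row_pairs A' B'"
    and A: "A \<in> carrier_mat m n" and B: "B \<in> carrier_mat m n"
    and A': "A' \<in> carrier_mat m' n" and B': "B' \<in> carrier_mat m' n"
    and "full_col_rank B"
  shows "full_col_rank B'"
  unfolding full_col_rank_def
proof (intro ballI impI)
  fix v assume v: "v \<in> carrier_vec (dim_col B')" and "B' *\<^sub>v v = 0\<^sub>v (dim_row B')"
  then have "A' *\<^sub>v 0\<^sub>v n = B' *\<^sub>v v" using A' B' mult_mat_vec_zero by simp
  then have "A *\<^sub>v 0\<^sub>v n = B *\<^sub>v v" using mult_vec_eq_of_row_pairs_subset assms(1) A B A' B' by simp
  then have "B *\<^sub>v v = 0\<^sub>v m" using A mult_mat_vec_zero by simp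
  then show "v = 0\<^sub>v (dim_col B')" using full_col_rankD[OF \<open>full_col_rank B\<close> B] v B' by simp
qed

locale pssd_execution =
  fixes Nd M :: nat and E :: "nat \<Rightarrow> nat \<Rightarrow> bool" and DXl DYl :: "nat \<Rightarrow> real mat"
    and DXs DYs :: "real mat" and C :: "nat \<Rightarrow> nat \<Rightarrow> real mat"
  assumes local_carrier: "\<forall>a < M. DXl a \<in> carrier_mat (dim_row (DXl a)) Nd \<and>
      DYl a \<in> carrier_mat (dim_row (DXl a)) Nd"
    and signature_carrier: "DXs \<in> carrier_mat (dim_row DXs) Nd" "DYs \<in> carrier_mat (dim_row DXs) Nd"
    and signature_full_col_rank: "full_col_rank DYs"
    and signature_rows: "\<forall>a < M. row_pairs DXs DYs \<subseteq> row_pairs (DXl a) (DYl a)"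
    and run: "pssd_run Nd M E DXl DYl C"
begin

definition nbhd_colspace :: "nat \<Rightarrow> nat \<Rightarrow> real vec set" where
  "nbhd_colspace k i = (\<Inter>j \<in> insert i (in_nbrs M E i). colspace (C k j))"

lemma local_carrier_mat:
  "a < M \<Longrightarrow> DXl a \<in> carrier_mat (dim_row (DXl a)) Nd"
  "a < M \<Longrightarrow> DYl a \<in> carrier_mat (dim_row (DXl a)) Nd"
  using local_carrier by auto

lemma local_full_col_rank: "a < M \<Longrightarrow> full_col_rank (DYl a)"
  using full_col_rank_of_row_pairs_subset[OF signature_rows[rule_format] signature_carrier
      local_carrier_mat signature_full_col_rank] .

lemma C_0: "j < M \<Longrightarrow> C 0 j = 1\<^sub>m Nd"
  using run[unfolded pssd_run_def, THEN conjunct1] by simp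

lemma C_SucE:
  assumes "i < M"
  obtains D F where "is_basis_mat Nd D (nbhd_colspace k i)" "ssd (DXl i * D) (DYl i * D) F"
    "C (Suc k) i = (if dim_col (D * F) < dim_col (C k i) then D * F else C k i)"
  using run[unfolded pssd_run_def, THEN conjunct2, rule_format, of "Suc k" i] assms that
  unfolding nbhd_colspace_def by auto

lemma C_Suc_carrier_colspace:
  assumes i: "i < M"
    and prev: "\<forall>j < M. C k j \<in> carrier_mat Nd (dim_col (C k j)) \<and> full_col_rank (C k j)"
  shows "C (Suc k) i \<in> carrier_mat Nd (dim_col (C (Suc k) i)) \<and> full_col_rank (C (Suc k) i) \<and>
    colspace (C (Suc k) i) = greatest_rel_invariant (DXl i) (DYl i) (nbhd_colspace k i)"
proof -
  obtain D F where D: "is_basis_mat Nd D (nbhd_colspace k i)"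
    and F: "ssd (DXl i * D) (DYl i * D) F"
    and C_Suc_eq: "C (Suc k) i = (if dim_col (D * F) < dim_col (C k i) then D * F else C k i)"
    using C_SucE[OF i] .
  have Dc: "D \<in> carrier_mat Nd (dim_col D)" and "full_col_rank D" "colspace D = nbhd_colspace k i"
    using D unfolding is_basis_mat_def by auto
  note DF = ssd_mult_colspace[OF F local_carrier_mat[OF i] local_full_col_rank[OF i] Dc
      \<open>full_col_rank D\<close>, unfolded \<open>colspace D = nbhd_colspace k i\<close>]
  show ?thesis
  proof (cases "dim_col (D * F) < dim_col (C k i)")
    case True
    then show ?thesis using C_Suc_eq DF by simp
  next
    case False
    have "colspace (D * F) \<subseteq> nbhd_colspace k i"
      using DF(3) greatest_rel_invariant_subset by simp
    then have sub: "colspace (D * F) \<subseteq> colspace (C k i)" unfolding nbhd_colspace_def by auto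
    have Ck: "C k i \<in> carrier_mat Nd (dim_col (C k i))" "full_col_rank (C k i)" using prev i by auto
    have "dim_col (C k i) \<le> dim_col (D * F)" using False by simp
    from colspace_eq_if_subset_dim_col_le[OF DF(1,2) Ck(1) sub this]
    have "colspace (C k i) = greatest_rel_invariant (DXl i) (DYl i) (nbhd_colspace k i)"
      using DF(3) by (rule trans[OF sym])
    moreover have "C (Suc k) i = C k i" using C_Suc_eq False by simp
    ultimately show ?thesis using Ck by (simp only:)
  qed
qed

lemma C_carrier_full_col_rank: "j < M \<Longrightarrow> C k j \<in> carrier_mat Nd (dim_col (C k j)) \<and> full_col_rank (C k j)"
proof (induction k arbitrary: j)
  case 0
  then show ?case using C_0 full_col_rank_one_mat by simp
next
  case (Suc k)
  then show ?case using C_Suc_carrier_colspace by blast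
qed

lemma colspace_C_Suc:
  "i < M \<Longrightarrow> colspace (C (Suc k) i) = greatest_rel_invariant (DXl i) (DYl i) (nbhd_colspace k i)"
  using C_Suc_carrier_colspace C_carrier_full_col_rank by blast

lemma colspace_C_Suc_subset:
  "i < M \<Longrightarrow> j \<in> insert i (in_nbrs M E i) \<Longrightarrow> colspace (C (Suc k) i) \<subseteq> colspace (C k j)"
  using colspace_C_Suc greatest_rel_invariant_subset unfolding nbhd_colspace_def by blast

lemma rel_invariant_colspace_C_Suc: "i < M \<Longrightarrow> rel_invariant (DXl i) (DYl i) (colspace (C (Suc k) i))"
  using colspace_C_Suc rel_invariant_greatest by simp

lemma colspace_C_subset_path:
  "(j, i) \<in> edge_rel M E ^^ n \<Longrightarrow> i < M \<Longrightarrow> colspace (C (n + k) i) \<subseteq> colspace (C k j)"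
proof (induction n arbitrary: i)
  case 0
  then show ?case by simp
next
  case (Suc n)
  then obtain h where "(j, h) \<in> edge_rel M E ^^ n" "(h, i) \<in> edge_rel M E" by auto
  then have "h < M" "h \<in> in_nbrs M E i" unfolding edge_rel_def in_nbrs_def by auto
  then have "colspace (C (Suc n + k) i) \<subseteq> colspace (C (n + k) h)"
    using colspace_C_Suc_subset \<open>i < M\<close> by simp
  also have "\<dots> \<subseteq> colspace (C k j)" using Suc.IH \<open>(j, h) \<in> edge_rel M E ^^ n\<close> \<open>h < M\<close> .
  finally show ?case .
qed

lemma rel_invariant_all_agents_subset_colspace_C:
  assumes "S \<subseteq> carrier_vec Nd" and "\<forall>a < M. rel_invariant (DXl a) (DYl a) S" and "j < M"
  shows "S \<subseteq> colspace (C k j)"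
  using \<open>j < M\<close>
proof (induction k arbitrary: j)
  case 0
  then show ?case using C_0 assms(1) colspace_one_mat by simp
next
  case (Suc k)
  then have "S \<subseteq> nbhd_colspace k j" unfolding nbhd_colspace_def in_nbrs_def by blast
  then show ?case
    using colspace_C_Suc[OF \<open>j < M\<close>] rel_invariant_subset_greatest assms(2) \<open>j < M\<close> by simp
qed

lemma signature_mult_vec_eq:
  assumes "a < M" "DXl a *\<^sub>v v = DYl a *\<^sub>v w"
  shows "DXs *\<^sub>v v = DYs *\<^sub>v w"
  using mult_vec_eq_of_row_pairs_subset[OF signature_rows[rule_format, OF \<open>a < M\<close>] _ _ assms(2)]
    signature_carrier(2) local_carrier_mat(2)[OF \<open>a < M\<close>] by simp

lemma signature_determines_image:
  assumes "a < M" "b < M" "w \<in> carrier_vec Nd" "w' \<in> carrier_vec Nd"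
    and "DXl a *\<^sub>v v = DYl a *\<^sub>v w" "DXl b *\<^sub>v v = DYl b *\<^sub>v w'"
  shows "w = w'"
proof -
  have "DYs *\<^sub>v w = DYs *\<^sub>v w'"
    using signature_mult_vec_eq[OF assms(1,5)] signature_mult_vec_eq[OF assms(2,6)] by simp
  then show ?thesis
    using full_col_rank_inj[OF signature_carrier(2) signature_full_col_rank] assms(3,4) by simp
qed

lemma colspace_C_carrier: "j < M \<Longrightarrow> colspace (C k j) \<subseteq> carrier_vec Nd"
  using colspace_carrier[OF conjunct1[OF C_carrier_full_col_rank]] .

lemma colspace_C_common_witness:
  assumes i: "i < M" and paths: "\<forall>a < M. \<exists>n < k. (a, i) \<in> edge_rel M E ^^ n"
    and v: "v \<in> colspace (C k i)"
  obtains w where "w \<in> colspace (C k i)" "\<forall>a < M. DXl a *\<^sub>v v = DYl a *\<^sub>v w"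
proof -
  obtain n where "n < k" using paths i by blast
  then obtain k' where "k = Suc k'" by (cases k) auto
  then obtain w where w: "w \<in> colspace (C k i)" "DXl i *\<^sub>v v = DYl i *\<^sub>v w"
    using rel_invariant_colspace_C_Suc[OF i] v unfolding rel_invariant_def by blast
  have "DXl a *\<^sub>v v = DYl a *\<^sub>v w" if a: "a < M" for a
  proof -
    obtain n where path: "(a, i) \<in> edge_rel M E ^^ n" and "n < k" using paths a by blast
    then obtain k'' where "k = Suc (n + k'')" using less_imp_Suc_add by blast
    then have sub: "colspace (C k i) \<subseteq> colspace (C (Suc k'') a)"
      using colspace_C_subset_path[OF path i, of "Suc k''"] by simp
    then obtain w' where w': "w' \<in> colspace (C (Suc k'') a)" "DXl a *\<^sub>v v = DYl a *\<^sub>v w'"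
      using rel_invariant_colspace_C_Suc[OF a] v unfolding rel_invariant_def by blast
    have "w = w'"
      using signature_determines_image[OF i a subsetD[OF colspace_C_carrier[OF i] w(1)]
          subsetD[OF colspace_C_carrier[OF a] w'(1)] w(2) w'(2)] .
    then show ?thesis using w'(2) by simp
  qed
  then show thesis using that w(1) by blast
qed

lemma rel_invariant_colspace_C_of_cover:
  assumes cover: "row_pairs A B \<subseteq> (\<Union>a \<in> {..<M}. row_pairs (DXl a) (DYl a))"
    and "dim_row B = dim_row A"
    and "i < M" and "\<forall>a < M. \<exists>n < k. (a, i) \<in> edge_rel M E ^^ n"
  shows "rel_invariant A B (colspace (C k i))"
  unfolding rel_invariant_def
proof
  fix v assume "v \<in> colspace (C k i)"
  then obtain w where w: "w \<in> colspace (C k i)" "\<forall>a < M. DXl a *\<^sub>v v = DYl a *\<^sub>v w"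
    by (rule colspace_C_common_witness[OF assms(3,4)])
  have "\<forall>a \<in> {..<M}. dim_row (DYl a) = dim_row (DXl a)" using local_carrier by auto
  moreover have "\<forall>a \<in> {..<M}. DXl a *\<^sub>v v = DYl a *\<^sub>v w" using w(2) by simp
  ultimately have "A *\<^sub>v v = B *\<^sub>v w"
    by (rule mult_vec_eq_of_row_pairs_cover[OF cover \<open>dim_row B = dim_row A\<close>])
  then show "\<exists>w \<in> colspace (C k i). A *\<^sub>v v = B *\<^sub>v w" using w(1) by blast
qed

lemma colspace_C_eq_greatest_of_cover:
  assumes cover: "(\<Union>a \<in> {..<M}. row_pairs (DXl a) (DYl a)) = row_pairs A B"
    and dims: "dim_row B = dim_row A"
    and i: "i < M" and paths: "\<forall>a < M. \<exists>n < k. (a, i) \<in> edge_rel M E ^^ n"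
  shows "colspace (C k i) = greatest_rel_invariant A B (carrier_vec Nd)"
proof
  have "rel_invariant A B (colspace (C k i))"
    using rel_invariant_colspace_C_of_cover[OF _ dims i paths] cover by simp
  with colspace_C_carrier[OF i]
  show "colspace (C k i) \<subseteq> greatest_rel_invariant A B (carrier_vec Nd)"
    by (rule rel_invariant_subset_greatest)
  have "rel_invariant (DXl a) (DYl a) (greatest_rel_invariant A B (carrier_vec Nd))" if "a < M" for a
  proof (rule rel_invariant_of_row_pairs_subset[OF _ _ dims rel_invariant_greatest])
    show "row_pairs (DXl a) (DYl a) \<subseteq> row_pairs A B" using cover that by blast
    show "dim_row (DYl a) = dim_row (DXl a)" using local_carrier_mat(2)[OF that] by simp
  qed
  then show "greatest_rel_invariant A B (carrier_vec Nd) \<subseteq> colspace (C k i)"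
    using rel_invariant_all_agents_subset_colspace_C[OF greatest_rel_invariant_subset _ i] by blast
qed

end

lemma edge_rel_relpow_dist:
  assumes "globally_reachable M E i" "j < M"
  shows "(j, i) \<in> edge_rel M E ^^ dist M E j i"
proof -
  have "(j, i) \<in> (edge_rel M E)\<^sup>*" using assms unfolding globally_reachable_def by simp
  then obtain n where "(j, i) \<in> edge_rel M E ^^ n" using rtrancl_power by blast
  then show ?thesis unfolding dist_def by (rule LeastI)
qed

lemma relpow_shorter_than:
  assumes "globally_reachable M E i" and "k \<ge> Max {dist M E j i | j. j < M} + 1"
  shows "\<forall>a < M. \<exists>n < k. (a, i) \<in> edge_rel M E ^^ n"
proof (intro allI impI)
  fix a assume "a < M"
  have "{dist M E j i | j. j < M} = (\<lambda>j. dist M E j i) ` {..<M}" by auto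
  then have "dist M E a i < k"
    using Max_ge[OF finite_imageI imageI[where f = "\<lambda>j. dist M E j i",
          OF lessThan_iff[THEN iffD2, OF \<open>a < M\<close>]]] assms(2) by simp
  then show "\<exists>n < k. (a, i) \<in> edge_rel M E ^^ n"
    using edge_rel_relpow_dist[OF assms(1) \<open>a < M\<close>] by blast
qed

theorem theorem5p2:
  fixes Nd M :: nat and DX DY DXs DYs :: "real mat"
    and DXl DYl :: "nat \<Rightarrow> real mat" and E :: "nat \<Rightarrow> nat \<Rightarrow> bool"
    and C :: "nat \<Rightarrow> nat \<Rightarrow> real mat" and Cssd :: "real mat" and i k :: nat
  assumes "M \<ge> 1"
    and "DX \<in> carrier_mat (dim_row DX) Nd" and "DY \<in> carrier_mat (dim_row DX) Nd"
    and "full_col_rank DX" and "full_col_rank DY"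
    and "\<forall>a < M. DXl a \<in> carrier_mat (dim_row (DXl a)) Nd \<and> DYl a \<in> carrier_mat (dim_row (DXl a)) Nd"
    and "(\<Union>a \<in> {..<M}. row_pairs (DXl a) (DYl a)) = row_pairs DX DY"
    and "DXs \<in> carrier_mat (dim_row DXs) Nd" and "DYs \<in> carrier_mat (dim_row DXs) Nd"
    and "full_col_rank DXs" and "full_col_rank DYs"
    and "\<forall>a < M. row_pairs DXs DYs \<subseteq> row_pairs (DXl a) (DYl a)"
    and "pssd_run Nd M E DXl DYl C"
    and "ssd DX DY Cssd"
    and "globally_reachable M E i"
    and "k \<ge> Max {dist M E j i | j. j < M} + 1"
  shows "colspace (C k i) = colspace Cssd"
proof -
  interpret pssd_execution Nd M E DXl DYl DXs DYs C
    by (rule pssd_execution.intro[OF assms(6,8,9,11,12,13)])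
  have "i < M" using assms(15) unfolding globally_reachable_def by simp
  have "colspace (C k i) = greatest_rel_invariant DX DY (carrier_vec Nd)"
    using colspace_C_eq_greatest_of_cover[OF assms(7) _ \<open>i < M\<close> relpow_shorter_than[OF assms(15,16)]]
      assms(3) by simp
  also have "\<dots> = colspace Cssd"
    by (rule ssd_colspace[OF assms(14,2,3,5), symmetric])
  finally show ?thesis .
qed

end
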